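(* Let $\mathcal A$ be an algebra over $k$, $\boldsymbol\sigma\in\mathrm{Aut}^n_{\mathrm{cfo}}(\mathcal A)$ and $\boldsymbol m\in\mathbb Z^n_{>0}$ with $\boldsymbol\sigma^{\boldsymbol m}=\mathbf{id}$. Then $M_{\boldsymbol m}(\mathcal A,\boldsymbol\sigma)$ and $M_{\mathrm{ord}(\boldsymbol\sigma)}(\mathcal A,\boldsymbol\sigma)$ are support-isomorphic.
   Context: $k$ is an algebraically closed field of characteristic $0$; primitive roots of unity $\zeta_n$ are fixed with $\zeta_{mn}^m=\zeta_n$. Algebras need not be associative or unital. $\mathrm{Aut}^n_{\mathrm{cfo}}(\mathcal A)$ is the set of $n$-tuples $\boldsymbol\sigma=(\sigma_1,\dots,\sigma_n)$ of pairwise commuting finite-order automorphisms; $\boldsymbol\sigma^{\boldsymbol m}=\mathbf{id}$ means $\sigma_i^{m_i}=\mathrm{id}$ for all $i$; $\mathrm{ord}(\boldsymbol\sigma)=(\mathrm{ord}(\sigma_1),\dots,\mathrm{ord}(\sigma_n))$. For $\lambda=(l_1,\dots,l_n)\in\mathbb Z^n$, $\mathcal A^{\bar\lambda}=\{u:\sigma_i(u)=\zeta_{m_i}^{l_i}u\ \forall i\}$ and $M_{\boldsymbol m}(\mathcal A,\boldsymbol\sigma)=\bigoplus_{\lambda}\mathcal A^{\bar\lambda}\otimes t^\lambda\subseteq\mathcal A\otimes k[t_1^{\pm1},\dots,t_n^{\pm1}]$, $\mathbb Z^n$-graded. Two $\mathbb Z^n$-graded algebras $\mathcal B,\mathcal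 B'$ are support-isomorphic if there exist an algebra isomorphism $\psi:\mathcal B\to\mathcal B'$ and a group isomorphism $\psi_{\mathrm{su}}$ from the subgroup generated by $\{\lambda:\mathcal B^\lambda\ne0\}$ onto the subgroup generated by $\{\lambda:\mathcal B'^\lambda\ne0\}$ with $\psi(\mathcal B^\lambda)=\mathcal B'^{\psi_{\mathrm{su}}(\lambda)}$ for all $\lambda$ in the former subgroup. *)

theory Defs
  imports "HOL-Computational_Algebra.Polynomial" "HOL-Library.Function_Algebras"
begin

definition alg_closed :: "'k::field itself \<Rightarrow> bool" where
  "alg_closed _ \<longleftrightarrow> (\<forall>p::'k poly. 0 < degree p \<longrightarrow> (\<exists>x. poly p x = 0))"

definition root_system :: "(nat \<Rightarrow> 'k::field) \<Rightarrow> bool" where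
  "root_system zeta \<longleftrightarrow>
     (\<forall>n>0. zeta n ^ n = 1 \<and> (\<forall>j. 0 < j \<and> j < n \<longrightarrow> zeta n ^ j \<noteq> 1)) \<and>
     (\<forall>m n. 0 < m \<and> 0 < n \<longrightarrow> zeta (m * n) ^ m = zeta n)"

definition is_algebra :: "('k::field \<Rightarrow> 'a::ab_group_add \<Rightarrow> 'a) \<Rightarrow> ('a \<Rightarrow> 'a \<Rightarrow> 'a) \<Rightarrow> bool" where
  "is_algebra sc mul \<longleftrightarrow> vector_space sc \<and>
     (\<forall>x. Vector_Spaces.linear sc sc (mul x)) \<and> (\<forall>y. Vector_Spaces.linear sc sc (\<lambda>x. mul x y))"

definition is_automorphism ::
  "('k::field \<Rightarrow> 'a::ab_group_add \<Rightarrow> 'a) \<Rightarrow> ('a \<Rightarrow> 'a \<Rightarrow> 'a) \<Rightarrow> ('a \<Rightarrow> 'a) \<Rightarrow> bool" where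
  "is_automorphism sc mul \<phi> \<longleftrightarrow> bij \<phi> \<and> Vector_Spaces.linear sc sc \<phi> \<and>
     (\<forall>x y. \<phi> (mul x y) = mul (\<phi> x) (\<phi> y))"

definition finite_order :: "('a \<Rightarrow> 'a) \<Rightarrow> bool" where
  "finite_order \<phi> \<longleftrightarrow> (\<exists>m::nat. 0 < m \<and> \<phi> ^^ m = id)"

definition aut_order :: "('a \<Rightarrow> 'a) \<Rightarrow> nat" where
  "aut_order \<phi> = (LEAST m::nat. 0 < m \<and> \<phi> ^^ m = id)"

text \<open>n-tuples of pairwise commuting finite-order automorphisms, indexed by a finite type 'n
  (so n = CARD('n)).\<close>
definition Aut_cfo ::
  "('k::field \<Rightarrow> 'a::ab_group_add \<Rightarrow> 'a) \<Rightarrow> ('a \<Rightarrow> 'a \<Rightarrow> 'a) \<Rightarrow> ('n::finite \<Rightarrow> 'a \<Rightarrow> 'a) set" where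
  "Aut_cfo sc mul = {\<sigma>. (\<forall>i. is_automorphism sc mul (\<sigma> i) \<and> finite_order (\<sigma> i)) \<and>
                        (\<forall>i j. \<sigma> i \<circ> \<sigma> j = \<sigma> j \<circ> \<sigma> i)}"

text \<open>A \<otimes> k[t^{\<plusminus>1}] is modelled as finitely supported functions Z^n \<Rightarrow> A;
  f corresponds to the sum of f lam \<otimes> t^lam.\<close>

definition eig_comp ::
  "('k::field \<Rightarrow> 'a::ab_group_add \<Rightarrow> 'a) \<Rightarrow> (nat \<Rightarrow> 'k) \<Rightarrow> ('n \<Rightarrow> 'a \<Rightarrow> 'a) \<Rightarrow> ('n \<Rightarrow> nat)
    \<Rightarrow> ('n \<Rightarrow> int) \<Rightarrow> 'a set" where
  "eig_comp sc zeta \<sigma> m lam = {u. \<forall>i. \<sigma> i u = sc (zeta (m i) powi lam i) u}"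

definition multiloop ::
  "('k::field \<Rightarrow> 'a::ab_group_add \<Rightarrow> 'a) \<Rightarrow> (nat \<Rightarrow> 'k) \<Rightarrow> ('n \<Rightarrow> 'a \<Rightarrow> 'a) \<Rightarrow> ('n \<Rightarrow> nat)
    \<Rightarrow> (('n \<Rightarrow> int) \<Rightarrow> 'a) set" where
  "multiloop sc zeta \<sigma> m =
     {f. finite {lam. f lam \<noteq> 0} \<and> (\<forall>lam. f lam \<in> eig_comp sc zeta \<sigma> m lam)}"

definition multiloop_deg ::
  "('k::field \<Rightarrow> 'a::ab_group_add \<Rightarrow> 'a) \<Rightarrow> (nat \<Rightarrow> 'k) \<Rightarrow> ('n \<Rightarrow> 'a \<Rightarrow> 'a) \<Rightarrow> ('n \<Rightarrow> nat)
    \<Rightarrow> ('n \<Rightarrow> int) \<Rightarrow> (('n \<Rightarrow> int) \<Rightarrow> 'a) set" where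
  "multiloop_deg sc zeta \<sigma> m lam =
     {f \<in> multiloop sc zeta \<sigma> m. \<forall>mu. mu \<noteq> lam \<longrightarrow> f mu = 0}"

text \<open>Operations of A \<otimes> k[t^{\<plusminus>1}]: pointwise scalar multiplication and the
  convolution product (addition is pointwise, from Function_Algebras).\<close>
definition lscale :: "('k \<Rightarrow> 'a \<Rightarrow> 'a) \<Rightarrow> 'k \<Rightarrow> ('g \<Rightarrow> 'a) \<Rightarrow> ('g \<Rightarrow> 'a)" where
  "lscale sc c f = (\<lambda>l. sc c (f l))"

definition lmul :: "('a::ab_group_add \<Rightarrow> 'a \<Rightarrow> 'a) \<Rightarrow> ('g::ab_group_add \<Rightarrow> 'a) \<Rightarrow> ('g \<Rightarrow> 'a) \<Rightarrow> ('g \<Rightarrow> 'a)" where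
  "lmul mul f g = (\<lambda>l. \<Sum>mu\<in>{mu. f mu \<noteq> 0}. mul (f mu) (g (l - mu)))"

definition gen_subgroup :: "'g::ab_group_add set \<Rightarrow> 'g set" where
  "gen_subgroup S = \<Inter>{H. S \<subseteq> H \<and> 0 \<in> H \<and> (\<forall>x\<in>H. \<forall>y\<in>H. x - y \<in> H)}"

definition grading_support :: "('g \<Rightarrow> 'b::zero set) \<Rightarrow> 'g set" where
  "grading_support C = {l. \<exists>x\<in>C l. x \<noteq> 0}"

text \<open>A graded algebra is given by its carrier B, its homogeneous components C, and the
  ambient scalar multiplication and product (addition is that of the ambient type).\<close>
definition support_isomorphic ::
  "('k \<Rightarrow> 'b::ab_group_add \<Rightarrow> 'b) \<Rightarrow> ('b \<Rightarrow> 'b \<Rightarrow> 'b) \<Rightarrow> 'b set \<Rightarrow> ('g::ab_group_add \<Rightarrow> 'b set)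
   \<Rightarrow> ('k \<Rightarrow> 'c::ab_group_add \<Rightarrow> 'c) \<Rightarrow> ('c \<Rightarrow> 'c \<Rightarrow> 'c) \<Rightarrow> 'c set \<Rightarrow> ('g \<Rightarrow> 'c set) \<Rightarrow> bool" where
  "support_isomorphic sc mul B C sc' mul' B' C' \<longleftrightarrow>
     (\<exists>\<psi> \<psi>su.
        bij_betw \<psi> B B' \<and>
        (\<forall>x\<in>B. \<forall>y\<in>B. \<psi> (x + y) = \<psi> x + \<psi> y \<and> \<psi> (mul x y) = mul' (\<psi> x) (\<psi> y)) \<and>
        (\<forall>c. \<forall>x\<in>B. \<psi> (sc c x) = sc' c (\<psi> x)) \<and>
        bij_betw \<psi>su (gen_subgroup (grading_support C)) (gen_subgroup (grading_support C')) \<and>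
        (\<forall>x\<in>gen_subgroup (grading_support C). \<forall>y\<in>gen_subgroup (grading_support C).
            \<psi>su (x + y) = \<psi>su x + \<psi>su y) \<and>
        (\<forall>l\<in>gen_subgroup (grading_support C). \<psi> ` C l = C' (\<psi>su l)))"

end

theory Submission
  imports Defs
begin

(* Write o for the orders of the sigma_i and m = d o componentwise. A nonzero u of degree l in
   the m-grading is fixed by sigma_i^(o_i), which multiplies it by zeta(m_i)^(l_i o_i); hence m_i
   divides l_i o_i, i.e. d_i divides l_i. So M_m(A,sigma) is concentrated in the degrees d Z^n, and
   since zeta(d_i o_i)^(d_i a_i) = zeta(o_i)^(a_i), its degree d a part is the degree a part of
   M_o(A,sigma). Precomposition with the dilation a |-> d a is therefore a graded isomorphism
   M_m(A,sigma) -> M_o(A,sigma), whose map on degrees is the inverse of the dilation. *)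

lemma aut_order_period:
  assumes "(\<phi>::'a \<Rightarrow> 'a) ^^ m = id" "0 < m"
  shows aut_order_pos: "0 < aut_order \<phi>" and funpow_aut_order: "\<phi> ^^ aut_order \<phi> = id"
  using LeastI[of "\<lambda>k. 0 < k \<and> \<phi> ^^ k = id" m] assms unfolding aut_order_def by auto

lemma aut_order_dvd:
  assumes "(\<phi>::'a \<Rightarrow> 'a) ^^ m = id" "0 < m"
  shows "aut_order \<phi> dvd m"
proof -
  define r where "r = m mod aut_order \<phi>"
  have "m = aut_order \<phi> * (m div aut_order \<phi>) + r"
    unfolding r_def by simp
  then have "\<phi> ^^ m = (\<phi> ^^ aut_order \<phi>) ^^ (m div aut_order \<phi>) \<circ> \<phi> ^^ r"
    by (metis funpow_add funpow_mult)
  then have "\<phi> ^^ r = id"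
    using assms funpow_aut_order[OF assms] by simp
  moreover have "r < aut_order \<phi>"
    unfolding r_def using aut_order_pos[OF assms] by simp
  ultimately have "r = 0"
    using not_less_Least[of r "\<lambda>k. 0 < k \<and> \<phi> ^^ k = id"] unfolding aut_order_def by auto
  then show ?thesis
    unfolding r_def by (simp add: mod_eq_0_iff_dvd)
qed

lemma root_system_powi_eq_1_imp_dvd:
  assumes "root_system (zeta :: nat \<Rightarrow> 'k::field)" "0 < n" "zeta n powi j = 1"
  shows "int n dvd j"
proof -
  have unit: "zeta n ^ n = 1" and primitive: "\<And>j. 0 < j \<Longrightarrow> j < n \<Longrightarrow> zeta n ^ j \<noteq> 1"
    using assms(1,2) unfolding root_system_def by auto
  have "zeta n \<noteq> 0"
    using unit assms(2) by (metis power_0_left less_not_refl2 zero_neq_one)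
  define r where "r = j mod int n"
  have r: "0 \<le> r" "r < int n"
    unfolding r_def using assms(2) by simp_all
  have "j = int n * (j div int n) + r"
    unfolding r_def by simp
  then have "zeta n powi j = (zeta n powi int n) powi (j div int n) * zeta n powi r"
    by (metis \<open>zeta n \<noteq> 0\<close> power_int_add power_int_mult)
  then have "zeta n ^ nat r = 1"
    using assms(3) unit r by (simp add: power_int_nonneg_exp)
  then have "r = 0"
    using primitive[of "nat r"] r by fastforce
  then show ?thesis
    unfolding r_def by (simp add: dvd_eq_mod_eq_0)
qed

lemma root_system_powi_mult:
  assumes "root_system (zeta :: nat \<Rightarrow> 'k::field)" "0 < d" "0 < n"
  shows "zeta (d * n) powi (int d * a) = zeta n powi a"
proof -
  have "zeta (d * n) ^ d = zeta n"
    using assms unfolding root_system_def by auto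
  then show ?thesis
    by (simp add: power_int_mult)
qed

lemma linear_funpow_eigenvector:
  assumes "vector_space sc" "Vector_Spaces.linear sc sc f" "f u = sc c u"
  shows "(f ^^ k) u = sc (c ^ k) u"
proof -
  interpret vector_space sc by fact
  interpret Vector_Spaces.linear sc sc f by fact
  show ?thesis
    by (induction k) (use assms(3) in \<open>simp_all add: scale mult.commute\<close>)
qed

definition dilate :: "('n \<Rightarrow> nat) \<Rightarrow> ('n \<Rightarrow> int) \<Rightarrow> ('n \<Rightarrow> int)" where
  "dilate d a = (\<lambda>i. int (d i) * a i)"

lemma additive_dilate: "additive (dilate d)"
  by unfold_locales (simp add: dilate_def fun_eq_iff algebra_simps)

lemma inj_dilate:
  assumes "\<And>i. 0 < d i"
  shows "inj (dilate d)"
proof (rule injI)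
  fix a b assume "dilate d a = dilate d b"
  then show "a = b"
    using assms by (simp add: dilate_def fun_eq_iff) (metis less_irrefl)
qed

lemma in_range_dilate:
  assumes "\<And>i. int (d i) dvd l i"
  shows "l \<in> range (dilate d)"
proof
  show "l = dilate d (\<lambda>i. l i div int (d i))"
    using assms by (simp add: dilate_def fun_eq_iff)
qed simp

lemma eig_comp_dilate:
  assumes "root_system zeta" "\<And>i. 0 < d i" "\<And>i. 0 < n i"
  shows "eig_comp sc zeta \<sigma> (\<lambda>i. d i * n i) (dilate d a) = eig_comp sc zeta \<sigma> n a"
  using root_system_powi_mult[OF assms(1) assms(2,3)] by (simp add: eig_comp_def dilate_def)

lemma linear_zero_mem_eig_comp:
  assumes "vector_space sc" "\<And>i. Vector_Spaces.linear sc sc (\<sigma> i)"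
  shows "0 \<in> eig_comp sc zeta \<sigma> m l"
proof -
  interpret vector_space sc by fact
  have "\<sigma> i 0 = 0" for i
  proof -
    interpret Vector_Spaces.linear sc sc "\<sigma> i" by fact
    show ?thesis by simp
  qed
  then show ?thesis
    by (simp add: eig_comp_def)
qed

lemma eig_comp_nonzero_dvd:
  assumes "vector_space sc" "Vector_Spaces.linear sc sc (\<sigma> i)" "\<sigma> i ^^ n i = id"
    and "root_system zeta" "0 < d i" "0 < n i"
    and "u \<in> eig_comp sc zeta \<sigma> (\<lambda>i. d i * n i) l" "u \<noteq> 0"
  shows "int (d i) dvd l i"
proof -
  interpret vector_space sc by fact
  define c where "c = zeta (d i * n i) powi l i"
  have "\<sigma> i u = sc c u"
    using assms(7) by (simp add: eig_comp_def c_def)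
  then have "(\<sigma> i ^^ n i) u = sc (c ^ n i) u"
    by (rule linear_funpow_eigenvector[OF assms(1,2)])
  then have "c ^ n i = 1"
    using assms(3,8) by (metis id_apply scale_one scale_cancel_right)
  then have "zeta (d i * n i) powi (l i * int (n i)) = 1"
    by (simp add: c_def power_int_power')
  then have "int (d i * n i) dvd l i * int (n i)"
    by (intro root_system_powi_eq_1_imp_dvd[OF assms(4)]) (simp_all add: assms(5,6))
  then show ?thesis
    using assms(6) by simp
qed

lemma subset_gen_subgroup: "S \<subseteq> gen_subgroup S"
  and zero_mem_gen_subgroup: "0 \<in> gen_subgroup S"
  and diff_mem_gen_subgroup: "x \<in> gen_subgroup S \<Longrightarrow> y \<in> gen_subgroup S \<Longrightarrow> x - y \<in> gen_subgroup S"
  and gen_subgroup_least: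
    "S \<subseteq> H \<Longrightarrow> 0 \<in> H \<Longrightarrow> (\<And>x y. x \<in> H \<Longrightarrow> y \<in> H \<Longrightarrow> x - y \<in> H) \<Longrightarrow> gen_subgroup S \<subseteq> H"
  unfolding gen_subgroup_def by auto

lemma gen_subgroup_image:
  assumes "additive e"
  shows "gen_subgroup (e ` S) = e ` gen_subgroup S"
proof
  interpret additive e by fact
  show "gen_subgroup (e ` S) \<subseteq> e ` gen_subgroup S"
  proof (rule gen_subgroup_least)
    show "e ` S \<subseteq> e ` gen_subgroup S"
      using subset_gen_subgroup by blast
    show "0 \<in> e ` gen_subgroup S"
      by (rule image_eqI[where x = 0]) (simp_all add: zero zero_mem_gen_subgroup)
    show "x - y \<in> e ` gen_subgroup S"
      if xy: "x \<in> e ` gen_subgroup S" "y \<in> e ` gen_subgroup S" for x y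
    proof -
      obtain a b where "a \<in> gen_subgroup S" "b \<in> gen_subgroup S" "x = e a" "y = e b"
        using xy by blast
      then show ?thesis
        by (intro image_eqI[where x = "a - b"]) (simp_all add: diff diff_mem_gen_subgroup)
    qed
  qed
  have "gen_subgroup S \<subseteq> e -` gen_subgroup (e ` S)"
    using subset_gen_subgroup[of "e ` S"]
    by (intro gen_subgroup_least) (auto simp: zero diff zero_mem_gen_subgroup diff_mem_gen_subgroup)
  then show "e ` gen_subgroup S \<subseteq> gen_subgroup (e ` S)"
    by blast
qed

lemma lmul_comp:
  assumes "inj e" "additive e" "{\<mu>. f \<mu> \<noteq> 0} \<subseteq> range e"
  shows "lmul mul f g \<circ> e = lmul mul (f \<circ> e) (g \<circ> e)"
proof
  fix a
  have supp: "{\<mu>. f \<mu> \<noteq> 0} = e ` {\<nu>. f (e \<nu>) \<noteq> 0}"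
    using assms(3) by auto
  have inj: "inj_on e {\<nu>. f (e \<nu>) \<noteq> 0}"
    using assms(1) by (rule inj_on_subset) simp
  have "(lmul mul f g \<circ> e) a = (\<Sum>\<mu>\<in>e ` {\<nu>. f (e \<nu>) \<noteq> 0}. mul (f \<mu>) (g (e a - \<mu>)))"
    by (simp only: lmul_def comp_def supp)
  also have "\<dots> = (\<Sum>\<nu>\<in>{\<nu>. f (e \<nu>) \<noteq> 0}. mul (f (e \<nu>)) (g (e (a - \<nu>))))"
    using sum.reindex[OF inj] additive.diff[OF assms(2)] by simp
  also have "\<dots> = lmul mul (f \<circ> e) (g \<circ> e) a"
    by (simp add: lmul_def)
  finally show "(lmul mul f g \<circ> e) a = lmul mul (f \<circ> e) (g \<circ> e) a" .
qed

definition extend_by_zero :: "('g \<Rightarrow> 'h) \<Rightarrow> ('g \<Rightarrow> 'a::zero) \<Rightarrow> 'h \<Rightarrow> 'a" where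
  "extend_by_zero e g l = (if l \<in> range e then g (inv e l) else 0)"

lemma extend_by_zero_comp: "inj e \<Longrightarrow> extend_by_zero e g \<circ> e = g"
  by (simp add: extend_by_zero_def fun_eq_iff)

lemma extend_by_zero_zero [simp]: "extend_by_zero e 0 = 0"
  by (simp add: extend_by_zero_def fun_eq_iff)

lemma extend_by_zero_of_comp:
  assumes "{l. f l \<noteq> 0} \<subseteq> range e"
  shows "extend_by_zero e (f \<circ> e) = f"
proof
  fix l show "extend_by_zero e (f \<circ> e) l = f l"
    using assms by (cases "l \<in> range e") (auto simp: extend_by_zero_def f_inv_into_f)
qed

lemma extend_by_zero_support:
  "inj e \<Longrightarrow> {l. extend_by_zero e g l \<noteq> 0} \<subseteq> e ` {a. g a \<noteq> 0}"
  by (auto simp: extend_by_zero_def)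

locale multiloop_reindexing =
  fixes sc :: "'k::field \<Rightarrow> 'a::ab_group_add \<Rightarrow> 'a" and zeta :: "nat \<Rightarrow> 'k"
    and \<sigma> :: "'n \<Rightarrow> 'a \<Rightarrow> 'a" and m m' :: "'n \<Rightarrow> nat"
    and e :: "('n \<Rightarrow> int) \<Rightarrow> ('n \<Rightarrow> int)"
  assumes inj: "inj e" and additive: "additive e"
    and eig_comp_reindex: "eig_comp sc zeta \<sigma> m (e a) = eig_comp sc zeta \<sigma> m' a"
    and eig_comp_nonzero: "u \<in> eig_comp sc zeta \<sigma> m l \<Longrightarrow> u \<noteq> 0 \<Longrightarrow> l \<in> range e"
    and zero_mem_eig_comp: "0 \<in> eig_comp sc zeta \<sigma> m l"
begin

lemma multiloop_support:
  "f \<in> multiloop sc zeta \<sigma> m \<Longrightarrow> {l. f l \<noteq> 0} \<subseteq> range e"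
  using eig_comp_nonzero unfolding multiloop_def by blast

lemma comp_mem_multiloop:
  assumes f: "f \<in> multiloop sc zeta \<sigma> m"
  shows "f \<circ> e \<in> multiloop sc zeta \<sigma> m'"
proof -
  have "finite (e -` {l. f l \<noteq> 0})"
    using f finite_vimageI[OF _ inj] unfolding multiloop_def by blast
  then show ?thesis
    using f unfolding multiloop_def by (auto simp: vimage_def simp flip: eig_comp_reindex)
qed

lemma extend_by_zero_mem_multiloop:
  assumes g: "g \<in> multiloop sc zeta \<sigma> m'"
  shows "extend_by_zero e g \<in> multiloop sc zeta \<sigma> m"
proof -
  have "finite (e ` {a. g a \<noteq> 0})"
    using g by (simp add: multiloop_def)
  then have "finite {l. extend_by_zero e g l \<noteq> 0}"
    by (rule finite_subset[OF extend_by_zero_support[OF inj]])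
  moreover have "extend_by_zero e g l \<in> eig_comp sc zeta \<sigma> m l" for l
  proof (cases "l \<in> range e")
    case True
    then obtain a where "l = e a"
      by blast
    then show ?thesis
      using g inj by (simp add: extend_by_zero_def eig_comp_reindex multiloop_def)
  qed (simp add: extend_by_zero_def zero_mem_eig_comp)
  ultimately show ?thesis
    unfolding multiloop_def by blast
qed

lemma bij_betw_comp_multiloop:
  "bij_betw (\<lambda>f. f \<circ> e) (multiloop sc zeta \<sigma> m) (multiloop sc zeta \<sigma> m')"
  by (rule bij_betw_byWitness[where f' = "extend_by_zero e"])
     (auto simp: extend_by_zero_comp[OF inj] extend_by_zero_of_comp multiloop_support
       comp_mem_multiloop extend_by_zero_mem_multiloop)

lemma multiloop_deg_outside_range:
  assumes "l \<notin> range e"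
  shows "multiloop_deg sc zeta \<sigma> m l \<subseteq> {0}"
proof
  fix f assume f: "f \<in> multiloop_deg sc zeta \<sigma> m l"
  have "f \<mu> = 0" for \<mu>
    using f multiloop_support[of f] assms unfolding multiloop_deg_def by (cases "\<mu> = l") auto
  then show "f \<in> {0}"
    by (simp add: fun_eq_iff)
qed

lemma image_comp_multiloop_deg:
  "(\<lambda>f. f \<circ> e) ` multiloop_deg sc zeta \<sigma> m (e a) = multiloop_deg sc zeta \<sigma> m' a"
proof (intro subset_antisym subsetI)
  fix g assume "g \<in> (\<lambda>f. f \<circ> e) ` multiloop_deg sc zeta \<sigma> m (e a)"
  then show "g \<in> multiloop_deg sc zeta \<sigma> m' a"
    using inj comp_mem_multiloop unfolding multiloop_deg_def by (auto dest: injD)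
next
  fix g assume g: "g \<in> multiloop_deg sc zeta \<sigma> m' a"
  then have "extend_by_zero e g \<in> multiloop_deg sc zeta \<sigma> m (e a)"
    using extend_by_zero_mem_multiloop inj
    unfolding multiloop_deg_def extend_by_zero_def by auto metis
  then show "g \<in> (\<lambda>f. f \<circ> e) ` multiloop_deg sc zeta \<sigma> m (e a)"
    by (rule image_eqI[rotated]) (simp add: extend_by_zero_comp[OF inj])
qed

lemma grading_support_multiloop_deg:
  "grading_support (multiloop_deg sc zeta \<sigma> m) = e ` grading_support (multiloop_deg sc zeta \<sigma> m')"
proof (intro subset_antisym subsetI)
  fix l assume "l \<in> grading_support (multiloop_deg sc zeta \<sigma> m)"
  then obtain f where f: "f \<in> multiloop_deg sc zeta \<sigma> m l" "f \<noteq> 0"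
    unfolding grading_support_def by blast
  have "l \<in> range e"
    using multiloop_deg_outside_range f by blast
  then obtain a where l: "l = e a"
    by blast
  have "extend_by_zero e (f \<circ> e) = f"
    using f(1) by (simp add: multiloop_deg_def extend_by_zero_of_comp multiloop_support)
  then have "f \<circ> e \<noteq> 0"
    using f(2) by auto
  moreover have "f \<circ> e \<in> multiloop_deg sc zeta \<sigma> m' a"
    using image_comp_multiloop_deg[of a] f l by blast
  ultimately show "l \<in> e ` grading_support (multiloop_deg sc zeta \<sigma> m')"
    unfolding grading_support_def l by blast
next
  fix l assume "l \<in> e ` grading_support (multiloop_deg sc zeta \<sigma> m')"
  then obtain a g where l: "l = e a" and g: "g \<in> multiloop_deg sc zeta \<sigma> m' a" "g \<noteq> 0"
    unfolding grading_support_def by blast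
  then obtain f where "f \<in> multiloop_deg sc zeta \<sigma> m l" "g = f \<circ> e"
    using image_comp_multiloop_deg[of a] by blast
  moreover have "f \<noteq> 0"
    using calculation g by (auto simp: fun_eq_iff)
  ultimately show "l \<in> grading_support (multiloop_deg sc zeta \<sigma> m)"
    unfolding grading_support_def by blast
qed

lemma support_isomorphic_multiloop:
  "support_isomorphic
     (lscale sc) (lmul mul) (multiloop sc zeta \<sigma> m) (multiloop_deg sc zeta \<sigma> m)
     (lscale sc) (lmul mul) (multiloop sc zeta \<sigma> m') (multiloop_deg sc zeta \<sigma> m')"
proof -
  define S where "S = gen_subgroup (grading_support (multiloop_deg sc zeta \<sigma> m'))"
  have degrees: "gen_subgroup (grading_support (multiloop_deg sc zeta \<sigma> m)) = e ` S"
    unfolding S_def grading_support_multiloop_deg by (rule gen_subgroup_image[OF additive])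
  have "bij_betw (inv e) (e ` S) S"
    by (rule bij_betw_byWitness[where f' = e]) (auto simp: inj)
  moreover have "inv e (x + y) = inv e x + inv e y" if "x \<in> e ` S" "y \<in> e ` S" for x y
    using that inj by (auto simp flip: additive.add[OF additive])
  moreover have "(\<lambda>f. f \<circ> e) ` multiloop_deg sc zeta \<sigma> m l = multiloop_deg sc zeta \<sigma> m' (inv e l)"
    if l: "l \<in> e ` S" for l
  proof -
    obtain a where "l = e a"
      using l by blast
    then show ?thesis
      using inj by (simp add: image_comp_multiloop_deg)
  qed
  moreover have "lmul mul f g \<circ> e = lmul mul (f \<circ> e) (g \<circ> e)"
    if "f \<in> multiloop sc zeta \<sigma> m" for f g
    using lmul_comp[OF inj additive multiloop_support[OF that]] .
  moreover have "(f + g) \<circ> e = (f \<circ> e) + (g \<circ> e)" "lscale sc c f \<circ> e = lscale sc c (f \<circ> e)"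
    for f g :: "('n \<Rightarrow> int) \<Rightarrow> 'a" and c
    by (simp_all add: fun_eq_iff lscale_def)
  ultimately show ?thesis
    unfolding support_isomorphic_def degrees S_def[symmetric]
    by (intro exI[of _ "\<lambda>f. f \<circ> e"] exI[of _ "inv e"]) (simp add: bij_betw_comp_multiloop)
qed

end

lemma multiloop_reindexing_dilate:
  assumes "vector_space sc" "\<And>i. Vector_Spaces.linear sc sc (\<sigma> i)" "root_system zeta"
    and "\<And>i. 0 < n i" "\<And>i. \<sigma> i ^^ n i = id" "\<And>i. 0 < d i"
  shows "multiloop_reindexing sc zeta \<sigma> (\<lambda>i. d i * n i) n (dilate d)"
proof (rule multiloop_reindexing.intro)
  show "inj (dilate d)"
    using assms(6) by (rule inj_dilate)
  show "additive (dilate d)"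
    by (rule additive_dilate)
  show "eig_comp sc zeta \<sigma> (\<lambda>i. d i * n i) (dilate d a) = eig_comp sc zeta \<sigma> n a" for a
    using assms(3,6,4) by (rule eig_comp_dilate)
  show "l \<in> range (dilate d)" if "u \<in> eig_comp sc zeta \<sigma> (\<lambda>i. d i * n i) l" "u \<noteq> 0" for u l
    using eig_comp_nonzero_dvd[where \<sigma> = \<sigma> and n = n and d = d, OF assms(1,2,5,3,6,4) that]
    by (rule in_range_dilate)
  show "0 \<in> eig_comp sc zeta \<sigma> (\<lambda>i. d i * n i) l" for l
    using assms(1,2) by (rule linear_zero_mem_eig_comp)
qed

theorem lemma2p2p4:
  fixes sc :: "'k::field_char_0 \<Rightarrow> 'a::ab_group_add \<Rightarrow> 'a"
    and mul :: "'a \<Rightarrow> 'a \<Rightarrow> 'a"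
    and zeta :: "nat \<Rightarrow> 'k"
    and \<sigma> :: "'n::finite \<Rightarrow> 'a \<Rightarrow> 'a"
    and m :: "'n \<Rightarrow> nat"
  assumes "alg_closed TYPE('k)"
    and "root_system zeta"
    and "is_algebra sc mul"
    and "\<sigma> \<in> Aut_cfo sc mul"
    and "\<forall>i. 0 < m i"
    and "\<forall>i. (\<sigma> i) ^^ (m i) = id"
  shows "support_isomorphic
           (lscale sc) (lmul mul) (multiloop sc zeta \<sigma> m) (multiloop_deg sc zeta \<sigma> m)
           (lscale sc) (lmul mul) (multiloop sc zeta \<sigma> (\<lambda>i. aut_order (\<sigma> i)))
           (multiloop_deg sc zeta \<sigma> (\<lambda>i. aut_order (\<sigma> i)))"
proof -
  have vs: "vector_space sc"
    using assms(3) by (simp add: is_algebra_def)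
  have lin: "Vector_Spaces.linear sc sc (\<sigma> i)" for i
    using assms(4) by (simp add: Aut_cfo_def is_automorphism_def)
  define n where "n i = aut_order (\<sigma> i)" for i
  define d where "d i = m i div n i" for i
  have n: "0 < n i" "\<sigma> i ^^ n i = id" "n i dvd m i" for i
    unfolding n_def using assms(5,6) aut_order_pos funpow_aut_order aut_order_dvd by blast+
  then have m: "m = (\<lambda>i. d i * n i)"
    by (simp add: d_def fun_eq_iff)
  then have d: "0 < d i" for i
    using assms(5) by (metis gr0I mult_0)
  interpret multiloop_reindexing sc zeta \<sigma> m n "dilate d"
    unfolding m using vs lin assms(2) n(1,2) d by (rule multiloop_reindexing_dilate)
  show ?thesis
    using support_isomorphic_multiloop unfolding n_def .
qed

end
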